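(* For $p\in(0,1)$ let $X_p^{(1)},X_p^{(2)}$ be independent geometric random variables, each with $P\{X=k\}=p(1-p)^k$, $k=0,1,2,\dots$, and let $X_p^S=X_p^{(1)}-X_p^{(2)}$. Then $$\inf_{p\in(0,1)}P\left\{|X^S_p-E[X^S_p]|\le\sqrt{\mathrm{Var}(X^S_p)}\right\}=\inf_{p\in(0,1)}P\left\{|X^S_p-E[X^S_p]|<\sqrt{\mathrm{Var}(X^S_p)}\right\}=\frac{\sqrt3}{3}.$$ *)

theory Defs
  imports "HOL-Probability.Probability"
begin

definition sym_geom_pmf :: "real \<Rightarrow> int pmf" where
  "sym_geom_pmf p = map_pmf (\<lambda>(a, b). int a - int b) (pair_pmf (geometric_pmf p) (geometric_pmf p))"

end

theory Submission
  imports Defs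
begin

text \<open>The symmetrised geometric law has weights \<open>p q\<^bsup>|k|\<^esup> / (2 - p)\<close> with \<open>q = 1 - p\<close>,
mean 0 and variance \<open>\<sigma>\<^sup>2 = 2 q / p\<^sup>2\<close>. Both events are therefore of the form \<open>|X| \<le> m\<close>
with \<open>\<sigma> \<le> m + 1\<close>, and such an event has probability \<open>1 - 2 q\<^bsup>m+1\<^esup> / (2 - p)\<close>.
For \<open>m = 0\<close> the condition \<open>\<sigma> \<le> 1\<close> means \<open>p \<ge> sqrt 3 - 1\<close>, and then the probability
\<open>p / (2 - p)\<close> is at least \<open>sqrt 3 / 3\<close>; for \<open>m \<ge> 1\<close> a second-order Bernoulli
estimate bounds it below by \<open>3 / 5\<close>. Conversely, for \<open>p > sqrt 3 - 1\<close> we have \<open>\<sigma> < 1\<close>,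
both events reduce to \<open>X = 0\<close>, and \<open>p / (2 - p)\<close> takes every value in
\<open>(sqrt 3 / 3, 1)\<close>.\<close>

lemma sums_of_nat_power2_times_power:
  fixes z :: "'a::{banach,real_normed_field}"
  assumes "norm z < 1"
  shows "(\<lambda>n. of_nat n ^ 2 * z ^ n) sums (z * (1 + z) / (1 - z) ^ 3)"
proof -
  have "(\<lambda>n. of_nat n * w ^ n) sums (w / (1 - w)\<^sup>2)" if "norm w < 1" for w :: 'a
    using geometric_sums_times_n[OF that] by (simp add: mult.commute)
  moreover have "((\<lambda>w. w / (1 - w)\<^sup>2) has_field_derivative (1 + z) / (1 - z) ^ 3) (at z)"
  proof -
    have nz: "1 - z \<noteq> 0" using assms by auto
    have "((\<lambda>w. w / (1 - w)\<^sup>2) has_field_derivative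
        ((1 - z)\<^sup>2 + z * (2 * (1 - z))) / ((1 - z)\<^sup>2 * (1 - z)\<^sup>2)) (at z)"
      using nz by (auto intro!: derivative_eq_intros simp: algebra_simps)
    moreover have "(1 - z)\<^sup>2 + z * (2 * (1 - z)) = (1 + z) * (1 - z)"
      and "(1 - z)\<^sup>2 * (1 - z)\<^sup>2 = (1 - z) ^ 3 * (1 - z)"
      by (simp_all add: algebra_simps power2_eq_square power3_eq_cube)
    ultimately show ?thesis using nz by simp
  qed
  ultimately have "(\<lambda>n. diffs of_nat n * z ^ n) sums ((1 + z) / (1 - z) ^ 3)"
    using assms by (intro termdiffs_sums_strong[where K = 1])
  then have "(\<lambda>n. z * (of_nat (Suc n) ^ 2 * z ^ n)) sums (z * ((1 + z) / (1 - z) ^ 3))"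
    by (intro sums_mult) (simp add: diffs_def power2_eq_square)
  then have "(\<lambda>n. of_nat (Suc n) ^ 2 * z ^ Suc n) sums (z * (1 + z) / (1 - z) ^ 3)"
    by (simp add: mult_ac)
  then show ?thesis
    by (subst (asm) sums_Suc_iff) simp
qed

lemma expectation_nat_pmf_sums:
  fixes M :: "nat pmf" and f :: "nat \<Rightarrow> real"
  assumes "\<And>n. 0 \<le> f n" and "(\<lambda>n. pmf M n * f n) sums S"
  shows "measure_pmf.expectation M f = S"
proof -
  have "integrable (count_space UNIV) (\<lambda>n. pmf M n * f n)"
    using assms unfolding integrable_count_space_nat_iff by (simp add: sums_iff abs_mult)
  then show ?thesis
    using assms(2) unfolding measure_pmf_eq_density
    by (simp add: integral_density integral_count_space_nat sums_iff)
qed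

lemma sym_geom_pmf_conv_bind:
  "sym_geom_pmf p = geometric_pmf p \<bind> (\<lambda>b. map_pmf (\<lambda>a. int a - int b) (geometric_pmf p))"
proof -
  have "sym_geom_pmf p =
      map_pmf (\<lambda>(b, a). int a - int b) (pair_pmf (geometric_pmf p) (geometric_pmf p))"
    unfolding sym_geom_pmf_def
    by (subst pair_commute_pmf) (simp add: pmf.map_comp o_def case_prod_unfold)
  then show ?thesis
    by (simp add: pair_pmf_def map_bind_pmf map_pmf_def[symmetric] pmf.map_comp o_def)
qed

lemma map_pmf_uminus_sym_geom_pmf: "map_pmf uminus (sym_geom_pmf p) = sym_geom_pmf p"
  unfolding sym_geom_pmf_def
  by (subst (2) pair_commute_pmf) (simp add: pmf.map_comp o_def case_prod_beta)

lemma pmf_sym_geom_pmf_of_nat: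
  assumes "0 < p" "p < 1"
  shows "pmf (sym_geom_pmf p) (int n) = p * (1 - p) ^ n / (2 - p)"
proof -
  let ?q = "1 - p"
  have "pmf (map_pmf (\<lambda>a. int a - int b) (geometric_pmf p)) (int n) = pmf (geometric_pmf p) (n + b)"
    for b
    using pmf_map_inj'[of "\<lambda>a. int a - int b" "geometric_pmf p" "n + b"] by (simp add: inj_def)
  then have "ennreal (pmf (sym_geom_pmf p) (int n)) =
      (\<integral>\<^sup>+ b. ennreal (?q ^ (n + b) * p) \<partial>measure_pmf (geometric_pmf p))"
    unfolding sym_geom_pmf_conv_bind ennreal_pmf_bind using assms by simp
  also have "\<dots> = (\<Sum>b. ennreal ((p\<^sup>2 * ?q ^ n) * (?q\<^sup>2) ^ b))"
    using assms
    by (simp add: nn_integral_measure_pmf nn_integral_count_space_nat ennreal_mult[symmetric]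
        power_add power2_eq_square power_mult_distrib mult_ac)
  also have "\<dots> = ennreal ((p\<^sup>2 * ?q ^ n) * (1 / (1 - ?q\<^sup>2)))"
    using assms by (intro suminf_ennreal_eq sums_mult geometric_sums) (auto simp: abs_square_less_1)
  also have "(p\<^sup>2 * ?q ^ n) * (1 / (1 - ?q\<^sup>2)) = p * ?q ^ n / (2 - p)"
    using assms by (simp add: field_simps power2_eq_square)
  finally show ?thesis
    using assms by (simp add: ennreal_inj)
qed

lemma pmf_sym_geom_pmf_uminus: "pmf (sym_geom_pmf p) (- k) = pmf (sym_geom_pmf p) k"
proof -
  have "pmf (sym_geom_pmf p) (- k) = pmf (map_pmf uminus (sym_geom_pmf p)) (- k)"
    by (simp add: map_pmf_uminus_sym_geom_pmf)
  also have "\<dots> = pmf (sym_geom_pmf p) k"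
    by (rule pmf_map_inj') (auto simp: inj_def)
  finally show ?thesis .
qed

lemma pmf_sym_geom_pmf:
  assumes "0 < p" "p < 1"
  shows "pmf (sym_geom_pmf p) k = p * (1 - p) ^ nat \<bar>k\<bar> / (2 - p)"
  using pmf_sym_geom_pmf_of_nat[OF assms, of "nat \<bar>k\<bar>"] pmf_sym_geom_pmf_uminus[of p k]
  by (cases "0 \<le> k") simp_all

lemma expectation_sym_geom_pmf: "measure_pmf.expectation (sym_geom_pmf p) real_of_int = 0"
proof -
  have "measure_pmf.expectation (sym_geom_pmf p) real_of_int =
      measure_pmf.expectation (map_pmf uminus (sym_geom_pmf p)) real_of_int"
    by (simp add: map_pmf_uminus_sym_geom_pmf)
  also have "\<dots> = - measure_pmf.expectation (sym_geom_pmf p) real_of_int"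
    by simp
  finally show ?thesis by simp
qed

lemma variance_sym_geom_pmf:
  assumes "0 < p" "p < 1"
  shows "measure_pmf.variance (sym_geom_pmf p) real_of_int = 2 * (1 - p) / p\<^sup>2"
proof -
  let ?M = "sym_geom_pmf p" and ?q = "1 - p"
  define Y where "Y = map_pmf (\<lambda>k. nat \<bar>k\<bar>) ?M"
  have pmf_Y: "pmf Y n * real n ^ 2 = 2 * p / (2 - p) * (real n ^ 2 * ?q ^ n)" for n
  proof (cases "n = 0")
    case False
    then have "(\<lambda>k. nat \<bar>k\<bar>) -` {n} = {int n, - int n}" by auto
    then have "pmf Y n = pmf ?M (int n) + pmf ?M (- int n)"
      using False by (simp add: Y_def pmf_map measure_measure_pmf_finite)
    then show ?thesis using assms by (simp add: pmf_sym_geom_pmf)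
  qed simp
  have "measure_pmf.variance ?M real_of_int = measure_pmf.expectation Y (\<lambda>n. real n ^ 2)"
    unfolding Y_def expectation_sym_geom_pmf
    by (auto intro!: Bochner_Integration.integral_cong simp: abs_if power2_eq_square)
  also have "\<dots> = 2 * p / (2 - p) * (?q * (1 + ?q) / (1 - ?q) ^ 3)"
  proof (rule expectation_nat_pmf_sums)
    show "(\<lambda>n. pmf Y n * real n ^ 2) sums (2 * p / (2 - p) * (?q * (1 + ?q) / (1 - ?q) ^ 3))"
      unfolding pmf_Y using assms by (intro sums_mult sums_of_nat_power2_times_power) auto
  qed simp
  also have "\<dots> = 2 * ?q / p\<^sup>2"
    using assms by (simp add: field_simps power2_eq_square power3_eq_cube)
  finally show ?thesis .
qed

lemma prob_sym_geom_pmf_abs_le: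
  assumes "0 < p" "p < 1"
  shows "measure_pmf.prob (sym_geom_pmf p) {k. \<bar>k\<bar> \<le> int m} = 1 - 2 * (1 - p) ^ (m + 1) / (2 - p)"
proof (induction m)
  case 0
  have "{k. \<bar>k\<bar> \<le> int 0} = {0}" by auto
  then show ?case using assms by (simp add: measure_pmf_single pmf_sym_geom_pmf field_simps)
next
  case (Suc m)
  have "{k. \<bar>k\<bar> \<le> int (Suc m)} = insert (int (Suc m)) (insert (- int (Suc m)) {- int m..int m})"
    and "{k. \<bar>k\<bar> \<le> int m} = {- int m..int m}"
    by auto
  then have "measure_pmf.prob (sym_geom_pmf p) {k. \<bar>k\<bar> \<le> int (Suc m)} =
      pmf (sym_geom_pmf p) (int (Suc m)) + pmf (sym_geom_pmf p) (- int (Suc m)) +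
      measure_pmf.prob (sym_geom_pmf p) {k. \<bar>k\<bar> \<le> int m}"
    by (simp add: measure_measure_pmf_finite)
  also have "\<dots> = 2 * (p * (1 - p) ^ Suc m / (2 - p)) + (1 - 2 * (1 - p) ^ Suc m / (2 - p))"
    unfolding Suc pmf_sym_geom_pmf_uminus pmf_sym_geom_pmf_of_nat[OF assms] by simp
  also have "\<dots> = 1 - 2 * (1 - p) ^ (Suc m + 1) / (2 - p)"
    using assms by (simp add: divide_simps) (simp add: algebra_simps)
  finally show ?case .
qed

lemma one_add_power_ge_second_order:
  fixes t :: real
  assumes "0 \<le> t"
  shows "1 + real n * t + real n * (real n - 1) / 2 * t\<^sup>2 \<le> (1 + t) ^ n"
proof (induction n)
  case (Suc n)
  have "(1 + t) * (1 + real n * t + real n * (real n - 1) / 2 * t\<^sup>2) =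
      1 + real (Suc n) * t + real (Suc n) * (real (Suc n) - 1) / 2 * t\<^sup>2
      + real n * (real n - 1) / 2 * t ^ 3"
    by (simp add: field_simps power2_eq_square power3_eq_cube)
  moreover have "0 \<le> real n * (real n - 1) / 2 * t ^ 3"
    using assms by (cases n) auto
  ultimately have "1 + real (Suc n) * t + real (Suc n) * (real (Suc n) - 1) / 2 * t\<^sup>2
      \<le> (1 + t) * (1 + real n * t + real n * (real n - 1) / 2 * t\<^sup>2)"
    by linarith
  also have "\<dots> \<le> (1 + t) ^ Suc n"
    using Suc assms by (simp add: mult_left_mono)
  finally show ?case .
qed simp

lemma sqrt3_div3_le_iff:
  fixes p :: real
  assumes "0 < p" "p < 2"
  shows "sqrt 3 / 3 \<le> p / (2 - p) \<longleftrightarrow> 2 * (1 - p) \<le> p\<^sup>2"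
    and "sqrt 3 / 3 < p / (2 - p) \<longleftrightarrow> 2 * (1 - p) < p\<^sup>2"
proof -
  \<comment> \<open>Both sides say \<open>p \<ge> sqrt 3 - 1\<close>, because \<open>p\<^sup>2 - 2 (1 - p) = (p + 1)\<^sup>2 - 3\<close>.\<close>
  define r where "r = sqrt (3::real)"
  have r: "r * r = 3" "0 < r" by (simp_all add: r_def)
  define d where "d = 3 * (2 - p) * (p + 1 + r)"
  have "0 < d" "0 < 3 + r" using assms r by (simp_all add: d_def)
  have "(p / (2 - p) - r / 3) * d = 3 * p * (p + 1 + r) - r * (2 - p) * (p + 1 + r)"
    using assms by (simp add: d_def field_simps)
  also have "\<dots> = (3 + r) * (p\<^sup>2 - 2 * (1 - p)) + (p - 2) * (r * r - 3)"
    by (simp add: algebra_simps power2_eq_square)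
  finally have "(p / (2 - p) - r / 3) * d = (3 + r) * (p\<^sup>2 - 2 * (1 - p))"
    using r by simp
  then have "p / (2 - p) - r / 3 = (3 + r) * (p\<^sup>2 - 2 * (1 - p)) / d"
    using \<open>0 < d\<close> by (subst nonzero_eq_divide_eq) auto
  moreover define k where "k = (3 + r) / d"
  ultimately have "p / (2 - p) - r / 3 = k * (p\<^sup>2 - 2 * (1 - p))"
    by simp
  moreover have "0 < k" using \<open>0 < d\<close> \<open>0 < 3 + r\<close> by (simp add: k_def)
  ultimately have "0 \<le> p / (2 - p) - r / 3 \<longleftrightarrow> 0 \<le> p\<^sup>2 - 2 * (1 - p)"
    and "0 < p / (2 - p) - r / 3 \<longleftrightarrow> 0 < p\<^sup>2 - 2 * (1 - p)"
    by (simp_all add: zero_le_mult_iff zero_less_mult_iff)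
  then show "sqrt 3 / 3 \<le> p / (2 - p) \<longleftrightarrow> 2 * (1 - p) \<le> p\<^sup>2"
    and "sqrt 3 / 3 < p / (2 - p) \<longleftrightarrow> 2 * (1 - p) < p\<^sup>2"
    unfolding r_def by linarith+
qed

lemma five_mult_one_minus_power_le:
  fixes p :: real
  assumes "0 < p" "p < 1" "2 \<le> n" "2 * (1 - p) \<le> (real n * p)\<^sup>2"
  shows "5 * (1 - p) ^ n \<le> 2 - p"
proof -
  \<comment> \<open>With \<open>t = p / q\<close> we have \<open>q (1 + t) = 1\<close>, and the hypothesis says \<open>(n t)\<^sup>2 q \<ge> 2\<close>.\<close>
  define q where "q = 1 - p"
  have q: "0 < q" "q < 1" using assms by (simp_all add: q_def)
  define t where "t = p / q"
  have "0 < t" using assms q by (simp add: t_def)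
  define u where "u = real n * t"
  have "0 \<le> u" using \<open>0 < t\<close> by (simp add: u_def)
  have "(u\<^sup>2 * q) * q = (real n * p)\<^sup>2"
    using q by (simp add: u_def t_def power2_eq_square field_simps)
  then have "(u\<^sup>2 * q) * q \<ge> 2 * q"
    using assms(4) by (simp add: q_def)
  then have u2: "u\<^sup>2 * q \<ge> 2" using q by simp
  moreover have "u\<^sup>2 * q \<le> u\<^sup>2" using q by (intro mult_left_le) auto
  ultimately have "1.4\<^sup>2 \<le> u\<^sup>2" by (simp add: power2_eq_square)
  then have u14: "1.4 \<le> u" using \<open>0 \<le> u\<close> by (rule power2_le_imp_le)
  have "real n * 2 * t\<^sup>2 \<le> real n * real n * t\<^sup>2"
    using assms(3) by (intro mult_right_mono mult_left_mono) auto
  then have "u\<^sup>2 / 4 \<le> real n * (real n - 1) / 2 * t\<^sup>2"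
    by (simp add: u_def power_mult_distrib power2_eq_square[of "real n"] algebra_simps)
  then have bernoulli: "1 + u + u\<^sup>2 / 4 \<le> (1 + t) ^ n"
    using one_add_power_ge_second_order[of t n] \<open>0 < t\<close> unfolding u_def by linarith
  have "2.4 * q + 1 / (2 * q) \<ge> 2.1"
  proof -
    have "2.4 * q * q + 1/2 - 2.1 * q = 2.4 * (q - 7/16)\<^sup>2 + 13/320"
      by (simp add: power2_eq_square algebra_simps)
    moreover have "0 \<le> (q - 7/16)\<^sup>2" by simp
    ultimately have "2.1 * q \<le> 2.4 * q * q + 1/2" by linarith
    then show ?thesis using q by (simp add: field_simps)
  qed
  moreover have "q * u \<ge> 1.4 * q" using u14 q by simp
  moreover have "u\<^sup>2 / 4 \<ge> 1 / (2 * q)" using u2 q by (simp add: field_simps)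
  moreover have "(1 + q) * (1 + u + u\<^sup>2 / 4) = 1 + u + u\<^sup>2 / 4 + q + q * u + u\<^sup>2 * q / 4"
    by (simp add: algebra_simps)
  ultimately have "5 \<le> (1 + q) * (1 + u + u\<^sup>2 / 4)"
    using u14 u2 by linarith
  also have "\<dots> \<le> (1 + q) * (1 + t) ^ n"
    using bernoulli q by (intro mult_left_mono) auto
  finally have "5 * q ^ n \<le> (1 + q) * ((1 + t) * q) ^ n"
    using q by (simp add: power_mult_distrib mult_right_mono mult.assoc)
  also have "(1 + t) * q = 1" using q by (simp add: t_def q_def field_simps)
  finally show ?thesis by (simp add: q_def)
qed

lemma sqrt3_div3_le_prob_sym_geom_pmf_abs_le:
  assumes "0 < p" "p < 1" "2 * (1 - p) \<le> ((real m + 1) * p)\<^sup>2"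
  shows "sqrt 3 / 3 \<le> measure_pmf.prob (sym_geom_pmf p) {k. \<bar>k\<bar> \<le> int m}"
proof -
  have "sqrt 3 / 3 \<le> 1 - 2 * (1 - p) ^ (m + 1) / (2 - p)"
  proof (cases m)
    case 0
    then have "2 * (1 - p) \<le> p\<^sup>2" using assms(3) by simp
    then have "sqrt 3 / 3 \<le> p / (2 - p)"
      using assms by (intro sqrt3_div3_le_iff(1)[THEN iffD2]) auto
    also have "p / (2 - p) = 1 - 2 * (1 - p) ^ (m + 1) / (2 - p)"
      using 0 assms by (simp add: field_simps)
    finally show ?thesis .
  next
    case (Suc n)
    have "sqrt 3 \<le> 9 / 5" by (rule real_le_lsqrt) (simp_all add: power2_eq_square)
    moreover have "5 * (1 - p) ^ (m + 1) \<le> 2 - p"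
      using assms Suc by (intro five_mult_one_minus_power_le) auto
    then have "2 * (1 - p) ^ (m + 1) / (2 - p) \<le> 2 / 5"
      using assms by (simp add: pos_divide_le_eq)
    ultimately show ?thesis by linarith
  qed
  then show ?thesis by (simp only: prob_sym_geom_pmf_abs_le[OF assms(1,2)])
qed

lemma cINF_eq_of_lower_bound_dense:
  fixes f :: "'a \<Rightarrow> 'b::{conditionally_complete_linorder, dense_linorder}"
  assumes "\<And>x. x \<in> A \<Longrightarrow> c \<le> f x" and "c < d" and "{c<..<d} \<subseteq> f ` A"
  shows "(INF x\<in>A. f x) = c"
proof (rule antisym)
  have "{c<..<d} \<noteq> {}" using \<open>c < d\<close> by (simp add: dense)
  then have "A \<noteq> {}" using assms(3) by auto
  then show "c \<le> (INF x\<in>A. f x)" using assms(1) by (rule cINF_greatest)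
  have "bdd_below (f ` A)" using assms(1) by (rule bdd_belowI2)
  with \<open>{c<..<d} \<noteq> {}\<close> assms(3) have "Inf (f ` A) \<le> Inf {c<..<d}"
    by (intro cInf_superset_mono)
  then show "(INF x\<in>A. f x) \<le> c" using \<open>c < d\<close> by simp
qed

lemma INF_prob_sym_geom_pmf_abs_le:
  fixes m :: "real \<Rightarrow> nat"
  assumes "\<And>p. 0 < p \<Longrightarrow> p < 1 \<Longrightarrow> sqrt (2 * (1 - p) / p\<^sup>2) \<le> real (m p) + 1"
    and "\<And>p. 0 < p \<Longrightarrow> p < 1 \<Longrightarrow> sqrt (2 * (1 - p) / p\<^sup>2) < 1 \<Longrightarrow> m p = 0"
  shows "(INF p\<in>{0<..<1}. measure_pmf.prob (sym_geom_pmf p) {k. \<bar>k\<bar> \<le> int (m p)}) = sqrt 3 / 3"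
proof (rule cINF_eq_of_lower_bound_dense)
  fix p :: real
  assume "p \<in> {0<..<1}"
  then have p: "0 < p" "p < 1" by simp_all
  have "2 * (1 - p) / p\<^sup>2 \<le> (real (m p) + 1)\<^sup>2"
    using assms(1)[OF p] p by (simp add: real_sqrt_le_iff')
  then have "2 * (1 - p) \<le> ((real (m p) + 1) * p)\<^sup>2"
    using p by (simp add: pos_divide_le_eq power_mult_distrib)
  then show "sqrt 3 / 3 \<le> measure_pmf.prob (sym_geom_pmf p) {k. \<bar>k\<bar> \<le> int (m p)}"
    by (rule sqrt3_div3_le_prob_sym_geom_pmf_abs_le[OF p])
next
  have "sqrt 3 < (3::real)" by (rule real_less_lsqrt) simp_all
  then show "sqrt 3 / 3 < (1::real)" by simp
next
  show "{sqrt 3 / 3<..<1} \<subseteq> (\<lambda>p. measure_pmf.prob (sym_geom_pmf p) {k. \<bar>k\<bar> \<le> int (m p)}) ` {0<..<1}"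
  proof
    fix y :: real
    assume y: "y \<in> {sqrt 3 / 3<..<1}"
    define p where "p = 2 * y / (1 + y)"
    from y have "sqrt 3 / 3 < y" "y < 1" by simp_all
    moreover have "0 < sqrt (3::real)" by simp
    ultimately have "0 < y" "y < 1" by linarith+
    then have p: "0 < p" "p < 1" and "p / (2 - p) = y"
      by (simp_all add: p_def field_simps)
    then have "2 * (1 - p) < p\<^sup>2" using y sqrt3_div3_le_iff(2)[of p] by simp
    then have "m p = 0" using p by (intro assms(2)) (simp_all add: field_simps)
    have "measure_pmf.prob (sym_geom_pmf p) {k. \<bar>k\<bar> \<le> int (m p)} = 1 - 2 * (1 - p) ^ (m p + 1) / (2 - p)"
      by (rule prob_sym_geom_pmf_abs_le[OF p])
    also have "\<dots> = p / (2 - p)"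
      using \<open>m p = 0\<close> p by (simp add: field_simps)
    finally have "measure_pmf.prob (sym_geom_pmf p) {k. \<bar>k\<bar> \<le> int (m p)} = y"
      using \<open>p / (2 - p) = y\<close> by simp
    then show "y \<in> (\<lambda>p. measure_pmf.prob (sym_geom_pmf p) {k. \<bar>k\<bar> \<le> int (m p)}) ` {0<..<1}"
      using p by force
  qed
qed

lemma sym_geom_pmf_deviation_events:
  assumes "0 < p" "p < 1"
  shows "{k. \<bar>real_of_int k - measure_pmf.expectation (sym_geom_pmf p) real_of_int\<bar>
            \<le> sqrt (measure_pmf.variance (sym_geom_pmf p) real_of_int)} =
         {k. \<bar>k\<bar> \<le> int (nat \<lfloor>sqrt (2 * (1 - p) / p\<^sup>2)\<rfloor>)}"
    and "{k. \<bar>real_of_int k - measure_pmf.expectation (sym_geom_pmf p) real_of_int\<bar>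
            < sqrt (measure_pmf.variance (sym_geom_pmf p) real_of_int)} =
         {k. \<bar>k\<bar> \<le> int (nat (\<lceil>sqrt (2 * (1 - p) / p\<^sup>2)\<rceil> - 1))}"
  unfolding variance_sym_geom_pmf[OF assms] unfolding expectation_sym_geom_pmf
  using assms by (auto simp: le_floor_iff less_ceiling_iff)

theorem proposition3p2:
  shows "(INF p\<in>{0<..<1::real}.
            measure_pmf.prob (sym_geom_pmf p)
              {k. \<bar>real_of_int k - measure_pmf.expectation (sym_geom_pmf p) real_of_int\<bar>
                  \<le> sqrt (measure_pmf.variance (sym_geom_pmf p) real_of_int)}) = sqrt 3 / 3
       \<and> (INF p\<in>{0<..<1::real}.
            measure_pmf.prob (sym_geom_pmf p)
              {k. \<bar>real_of_int k - measure_pmf.expectation (sym_geom_pmf p) real_of_int\<bar>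
                  < sqrt (measure_pmf.variance (sym_geom_pmf p) real_of_int)}) = sqrt 3 / 3"
proof -
  let ?\<sigma> = "\<lambda>p::real. sqrt (2 * (1 - p) / p\<^sup>2)"
  have "(INF p\<in>{0<..<1}. measure_pmf.prob (sym_geom_pmf p) {k. \<bar>k\<bar> \<le> int (nat \<lfloor>?\<sigma> p\<rfloor>)}) = sqrt 3 / 3"
    by (rule INF_prob_sym_geom_pmf_abs_le) linarith+
  moreover have "(INF p\<in>{0<..<1}. measure_pmf.prob (sym_geom_pmf p) {k. \<bar>k\<bar> \<le> int (nat (\<lceil>?\<sigma> p\<rceil> - 1))}) = sqrt 3 / 3"
  proof (rule INF_prob_sym_geom_pmf_abs_le)
    fix p :: real
    assume "0 < p" "p < 1"
    then have "0 < ?\<sigma> p" by simp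
    then show "?\<sigma> p \<le> real (nat (\<lceil>?\<sigma> p\<rceil> - 1)) + 1"
      and "?\<sigma> p < 1 \<Longrightarrow> nat (\<lceil>?\<sigma> p\<rceil> - 1) = 0"
      by (simp_all add: of_nat_nat)
  qed
  ultimately show ?thesis
    by (simp add: sym_geom_pmf_deviation_events cong: INF_cong_simp)
qed

end
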